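(* Let $K$ be a field, $V$ a vector space over $K$, and $f_L,f_R,g_L,g_R:V\to V$ linear maps, each of them nonzero. Let $\delta,\gamma\in K$ with $(\delta,\gamma)\ne(0,0)$. Then every $(\delta,\gamma)$-derivation $D$ of the algebra $A(f_L,f_R,g_L,g_R)$ has the form $$D(e)=\begin{cases}0&\text{if }\delta+\gamma\ne1,\\ \beta e&\text{if }\delta+\gamma=1,\end{cases}\qquad D(a)=\alpha a+v_a+w_a',$$ $$D(v)=\varphi(v)+\psi(v)',\qquad D(v')=\widetilde\varphi(v)+\widetilde\psi(v)'\quad(v\in V),$$ for some $\alpha,\beta\in K$, $v_a,w_a\in V$ and linear maps $\varphi,\widetilde\varphi,\psi,\widetilde\psi:V\to V$, which satisfy $$(\delta f_R+\gamma f_L)(v_a)=0,\qquad (\delta g_R+\gamma g_L)(w_a)=0,$$ and $$\begin{aligned} \widetilde\varphi\circ f_L&=\gamma\, g_L\circ\psi, & \widetilde\psi\circ f_L&=\delta\alpha f_L+\gamma f_L\circ\varphi,\\ \widetilde\varphi\circ f_R&=\delta\, g_R\circ\psi, & \widetilde\psi\circ f_R&=\gamma\alpha f_R+\delta f_R\circ\varphi,\\ \varphi\circ g_L&=\delta\alpha g_L+\gamma g_L\circ\widetilde\psi, & \psi\circ g_L&=\gamma f_L\circ\widetilde\varphi,\\ \varphi\circ g_R&=\gamma\alpha g_R+\delta g_R\circ\widetilde\psi, & \psi\circ g_R&=\delta f_R\circ\widetilde\varphi. \end{aligned}$$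
   Context: For fixed $\delta,\gamma\in K$, a $(\delta,\gamma)$-derivation of an algebra $A$ is a linear map $D:A\to A$ with $D(xy)=\delta D(x)y+\gamma xD(y)$ for all $x,y\in A$. Let $V'$ be a second copy of $V$, identified with $V$ via a linear bijection $v\mapsto v'$. The algebra $A(f_L,f_R,g_L,g_R)$ is the vector space $Ke\oplus Ka\oplus V\oplus V'$ (with $e,a$ two new basis elements) with bilinear multiplication determined by $e^2=e$, $a^2=0$, $av=f_L(v)'$, $va=f_R(v)'$, $av'=g_L(v)$, $v'a=g_R(v)$ for $v\in V$, and all other products among $e$, $a$, elements of $V$ and elements of $V'$ equal to zero. (No associativity of this algebra is assumed in the lemma.) *)

theory Defs
  imports Complex_Main "HOL-Library.Product_Plus"
begin

text \<open>Elements of A(fL,fR,gL,gR) = Ke + Ka + V + V' are represented as tuples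
  (x1, x2, v, w) meaning x1 e + x2 a + v + w'.\<close>

definition scaleA :: "('k \<Rightarrow> 'v \<Rightarrow> 'v) \<Rightarrow> 'k::field \<Rightarrow> 'k \<times> 'k \<times> 'v \<times> 'v \<Rightarrow> 'k \<times> 'k \<times> 'v \<times> 'v" where
  "scaleA scale c x = (case x of (x1, x2, v, w) \<Rightarrow> (c * x1, c * x2, scale c v, scale c w))"

text \<open>Bilinear multiplication determined by e e = e, a a = 0, a v = fL(v)', v a = fR(v)',
  a v' = gL(v), v' a = gR(v), all other products of basis parts zero.\<close>
definition multA ::
  "('k::field \<Rightarrow> 'v::ab_group_add \<Rightarrow> 'v) \<Rightarrow> ('v \<Rightarrow> 'v) \<Rightarrow> ('v \<Rightarrow> 'v) \<Rightarrow> ('v \<Rightarrow> 'v) \<Rightarrow> ('v \<Rightarrow> 'v)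
   \<Rightarrow> 'k \<times> 'k \<times> 'v \<times> 'v \<Rightarrow> 'k \<times> 'k \<times> 'v \<times> 'v \<Rightarrow> 'k \<times> 'k \<times> 'v \<times> 'v" where
  "multA scale fL fR gL gR x y = (case x of (x1, x2, v, w) \<Rightarrow> case y of (y1, y2, u, z) \<Rightarrow>
     (x1 * y1, 0, scale x2 (gL z) + scale y2 (gR w), scale x2 (fL u) + scale y2 (fR v)))"

definition is_dg_derivation ::
  "('k::field \<Rightarrow> 'v::ab_group_add \<Rightarrow> 'v) \<Rightarrow> ('v \<Rightarrow> 'v) \<Rightarrow> ('v \<Rightarrow> 'v) \<Rightarrow> ('v \<Rightarrow> 'v) \<Rightarrow> ('v \<Rightarrow> 'v)
   \<Rightarrow> 'k \<Rightarrow> 'k \<Rightarrow> ('k \<times> 'k \<times> 'v \<times> 'v \<Rightarrow> 'k \<times> 'k \<times> 'v \<times> 'v) \<Rightarrow> bool" where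
  "is_dg_derivation scale fL fR gL gR \<delta> \<gamma> D \<longleftrightarrow>
     Vector_Spaces.linear (scaleA scale) (scaleA scale) D \<and>
     (\<forall>x y. D (multA scale fL fR gL gR x y) =
        scaleA scale \<delta> (multA scale fL fR gL gR (D x) y) + scaleA scale \<gamma> (multA scale fL fR gL gR x (D y)))"

end

theory Submission
  imports Defs
begin

text \<open>Each defining relation of the algebra, fed through the twisted Leibniz rule, yields one
  constraint on D.  From e e = e the image of e has only an e-component, scaled by
  \<open>\<delta> + \<gamma>\<close>; the products of e with a, v and v' (all zero) kill the e-components of
  D a, D v and D v' as soon as \<open>(\<delta>, \<gamma>) \<noteq> (0, 0)\<close>; the zero products v w' and
  w' v kill the a-components of D v and D v' because the maps are nonzero; and the
  products of a with V and V' give the eight relations between the coordinate maps.\<close>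

lemma (in vector_space) scale_eq_0_if_annihilates_map:
  assumes "f \<noteq> (\<lambda>v. 0)" "\<And>w. scale c (f w) = 0"
  shows "c = 0"
  using assms by auto

locale A_derivation = vector_space scale
  for scale :: "'k::field \<Rightarrow> 'v::ab_group_add \<Rightarrow> 'v" +
  fixes fL fR gL gR :: "'v \<Rightarrow> 'v"
    and \<delta> \<gamma> :: 'k
    and D :: "'k \<times> 'k \<times> 'v \<times> 'v \<Rightarrow> 'k \<times> 'k \<times> 'v \<times> 'v"
  assumes linear_maps: "Vector_Spaces.linear scale scale fL" "Vector_Spaces.linear scale scale fR"
      "Vector_Spaces.linear scale scale gL" "Vector_Spaces.linear scale scale gR"
    and derivation: "is_dg_derivation scale fL fR gL gR \<delta> \<gamma> D"
begin

abbreviation mul where "mul \<equiv> multA scale fL fR gL gR"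

abbreviation smul where "smul \<equiv> scaleA scale"

lemma maps_zero [simp]: "fL 0 = 0" "fR 0 = 0" "gL 0 = 0" "gR 0 = 0"
  using linear_maps by (simp_all add: linear_iff_module_hom module_hom.zero)

lemma leibniz: "D (mul x y) = smul \<delta> (mul (D x) y) + smul \<gamma> (mul x (D y))"
  using derivation unfolding is_dg_derivation_def by blast

lemma D_add: "D (x + y) = D x + D y"
  and D_smul: "D (smul c x) = smul c (D x)"
  using derivation unfolding is_dg_derivation_def Vector_Spaces.linear_iff by blast+

lemma D_zero [simp]: "D (0, 0, 0, 0) = (0, 0, 0, 0)"
  using D_add[of 0 0] by (simp add: zero_prod_def)

lemmas mult_simps = multA_def scaleA_def scale_scale

lemma D_e:
  obtains \<beta> where "D (1, 0, 0, 0) = (\<beta>, 0, 0, 0)" "(\<delta> + \<gamma>) * \<beta> = \<beta>"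
proof -
  obtain \<beta> b p q where De: "D (1, 0, 0, 0) = (\<beta>, b, p, q)"
    by (cases "D (1, 0, 0, 0)") auto
  have "b = 0 \<and> p = 0 \<and> q = 0 \<and> \<beta> = (\<delta> + \<gamma>) * \<beta>"
    using leibniz[of "(1, 0, 0, 0)" "(1, 0, 0, 0)"] De by (simp add: mult_simps algebra_simps)
  with De that show thesis by simp
qed

lemma D_e_cases:
  obtains \<beta> where "D (1, 0, 0, 0) = (if \<delta> + \<gamma> \<noteq> 1 then (0, 0, 0, 0) else (\<beta>, 0, 0, 0))"
proof -
  obtain \<beta> where De: "D (1, 0, 0, 0) = (\<beta>, 0, 0, 0)" and "(\<delta> + \<gamma>) * \<beta> = \<beta>"
    by (rule D_e)
  then have "(\<delta> + \<gamma> - 1) * \<beta> = 0" by (simp add: algebra_simps)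
  then have "\<delta> + \<gamma> \<noteq> 1 \<Longrightarrow> \<beta> = 0" by simp
  with De show thesis by (intro that[of \<beta>]) auto
qed

lemma D_a_annihilated:
  assumes "D (0, 1, 0, 0) = (x, \<alpha>, va, wa)"
  shows "scale \<delta> (fR va) + scale \<gamma> (fL va) = 0" "scale \<delta> (gR wa) + scale \<gamma> (gL wa) = 0"
  using leibniz[of "(0, 1, 0, 0)" "(0, 1, 0, 0)"] assms by (simp_all add: mult_simps)

definition \<phi> :: "'v \<Rightarrow> 'v" where "\<phi> v = fst (snd (snd (D (0, 0, v, 0))))"
definition \<psi> :: "'v \<Rightarrow> 'v" where "\<psi> v = snd (snd (snd (D (0, 0, v, 0))))"

text \<open>\<open>\<phi>'\<close> and \<open>\<psi>'\<close> are the maps written \<open>\<widetilde>\<phi>\<close> and \<open>\<widetilde>\<psi>\<close> in the paper.\<close>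
definition \<phi>' :: "'v \<Rightarrow> 'v" where "\<phi>' v = fst (snd (snd (D (0, 0, 0, v))))"
definition \<psi>' :: "'v \<Rightarrow> 'v" where "\<psi>' v = snd (snd (snd (D (0, 0, 0, v))))"

lemma linear_coordinate_maps:
  "Vector_Spaces.linear scale scale \<phi>" "Vector_Spaces.linear scale scale \<psi>"
  "Vector_Spaces.linear scale scale \<phi>'" "Vector_Spaces.linear scale scale \<psi>'"
proof -
  have V_add: "D (0, 0, u + v, 0) = D (0, 0, u, 0) + D (0, 0, v, 0)"
    and V'_add: "D (0, 0, 0, u + v) = D (0, 0, 0, u) + D (0, 0, 0, v)" for u v
    using D_add[of "(0, 0, u, 0)" "(0, 0, v, 0)"] D_add[of "(0, 0, 0, u)" "(0, 0, 0, v)"] by simp_all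
  have V_scale: "D (0, 0, scale c v, 0) = smul c (D (0, 0, v, 0))"
    and V'_scale: "D (0, 0, 0, scale c v) = smul c (D (0, 0, 0, v))" for c v
    using D_smul[of c "(0, 0, v, 0)"] D_smul[of c "(0, 0, 0, v)"] by (simp_all add: scaleA_def)
  show "Vector_Spaces.linear scale scale \<phi>" "Vector_Spaces.linear scale scale \<psi>"
    "Vector_Spaces.linear scale scale \<phi>'" "Vector_Spaces.linear scale scale \<psi>'"
    unfolding Vector_Spaces.linear_iff \<phi>_def \<psi>_def \<phi>'_def \<psi>'_def
    by (simp_all add: vector_space_axioms V_add V'_add V_scale V'_scale scaleA_def split: prod.split)
qed

end

locale nondegenerate_A_derivation = A_derivation +
  assumes nondegenerate: "(\<delta>, \<gamma>) \<noteq> (0, 0)"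
    and nonzero_maps: "fL \<noteq> (\<lambda>v. 0)" "fR \<noteq> (\<lambda>v. 0)" "gL \<noteq> (\<lambda>v. 0)" "gR \<noteq> (\<lambda>v. 0)"
begin

lemma D_a:
  obtains \<alpha> va wa where "D (0, 1, 0, 0) = (0, \<alpha>, va, wa)"
proof -
  obtain x \<alpha> va wa where Da: "D (0, 1, 0, 0) = (x, \<alpha>, va, wa)"
    by (cases "D (0, 1, 0, 0)") auto
  obtain \<beta> where De: "D (1, 0, 0, 0) = (\<beta>, 0, 0, 0)"
    by (rule D_e)
  have "\<gamma> * x = 0"
    using leibniz[of "(1, 0, 0, 0)" "(0, 1, 0, 0)"] Da De by (simp add: mult_simps)
  moreover have "\<delta> * x = 0"
    using leibniz[of "(0, 1, 0, 0)" "(1, 0, 0, 0)"] Da De by (simp add: mult_simps)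
  ultimately have "x = 0"
    using nondegenerate by auto
  with Da that show thesis by simp
qed

lemma D_V: "D (0, 0, v, 0) = (0, 0, \<phi> v, \<psi> v)"
proof -
  obtain x y where Dv: "D (0, 0, v, 0) = (x, y, \<phi> v, \<psi> v)"
    by (simp add: \<phi>_def \<psi>_def prod_eq_iff)
  obtain \<beta> where De: "D (1, 0, 0, 0) = (\<beta>, 0, 0, 0)"
    by (rule D_e)
  have "\<gamma> * x = 0"
    using leibniz[of "(1, 0, 0, 0)" "(0, 0, v, 0)"] Dv De by (simp add: mult_simps)
  moreover have "\<delta> * x = 0"
    using leibniz[of "(0, 0, v, 0)" "(1, 0, 0, 0)"] Dv De by (simp add: mult_simps)
  moreover have "scale (\<delta> * y) (gL w) = 0" "scale (\<gamma> * y) (gR w) = 0" for w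
  proof -
    obtain x' y' where "D (0, 0, 0, w) = (x', y', \<phi>' w, \<psi>' w)"
      by (simp add: \<phi>'_def \<psi>'_def prod_eq_iff)
    then show "scale (\<delta> * y) (gL w) = 0" "scale (\<gamma> * y) (gR w) = 0"
      using leibniz[of "(0, 0, v, 0)" "(0, 0, 0, w)"] leibniz[of "(0, 0, 0, w)" "(0, 0, v, 0)"] Dv
      by (simp_all add: mult_simps)
  qed
  then have "\<delta> * y = 0" "\<gamma> * y = 0"
    using nonzero_maps scale_eq_0_if_annihilates_map by blast+
  ultimately show ?thesis
    using nondegenerate Dv by auto
qed

lemma D_V': "D (0, 0, 0, w) = (0, 0, \<phi>' w, \<psi>' w)"
proof -
  obtain x y where Dw: "D (0, 0, 0, w) = (x, y, \<phi>' w, \<psi>' w)"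
    by (simp add: \<phi>'_def \<psi>'_def prod_eq_iff)
  obtain \<beta> where De: "D (1, 0, 0, 0) = (\<beta>, 0, 0, 0)"
    by (rule D_e)
  have "\<gamma> * x = 0"
    using leibniz[of "(1, 0, 0, 0)" "(0, 0, 0, w)"] Dw De by (simp add: mult_simps)
  moreover have "\<delta> * x = 0"
    using leibniz[of "(0, 0, 0, w)" "(1, 0, 0, 0)"] Dw De by (simp add: mult_simps)
  moreover have "scale (\<gamma> * y) (fR v) = 0" "scale (\<delta> * y) (fL v) = 0" for v
    using leibniz[of "(0, 0, v, 0)" "(0, 0, 0, w)"] leibniz[of "(0, 0, 0, w)" "(0, 0, v, 0)"] Dw D_V[of v]
    by (simp_all add: mult_simps)
  then have "\<gamma> * y = 0" "\<delta> * y = 0"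
    using nonzero_maps scale_eq_0_if_annihilates_map by blast+
  ultimately show ?thesis
    using nondegenerate Dw by auto
qed

context
  fixes \<alpha> va wa
  assumes D_a_eq: "D (0, 1, 0, 0) = (0, \<alpha>, va, wa)"
begin

lemma fL_relations:
  "\<phi>' (fL v) = scale \<gamma> (gL (\<psi> v))"
  "\<psi>' (fL v) = scale (\<delta> * \<alpha>) (fL v) + scale \<gamma> (fL (\<phi> v))"
  using leibniz[of "(0, 1, 0, 0)" "(0, 0, v, 0)"] by (simp_all add: D_a_eq D_V D_V' mult_simps)

lemma fR_relations:
  "\<phi>' (fR v) = scale \<delta> (gR (\<psi> v))"
  "\<psi>' (fR v) = scale (\<gamma> * \<alpha>) (fR v) + scale \<delta> (fR (\<phi> v))"
  using leibniz[of "(0, 0, v, 0)" "(0, 1, 0, 0)"] by (simp_all add: D_a_eq D_V D_V' mult_simps add.commute)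

lemma gL_relations:
  "\<phi> (gL v) = scale (\<delta> * \<alpha>) (gL v) + scale \<gamma> (gL (\<psi>' v))"
  "\<psi> (gL v) = scale \<gamma> (fL (\<phi>' v))"
  using leibniz[of "(0, 1, 0, 0)" "(0, 0, 0, v)"] by (simp_all add: D_a_eq D_V D_V' mult_simps)

lemma gR_relations:
  "\<phi> (gR v) = scale (\<gamma> * \<alpha>) (gR v) + scale \<delta> (gR (\<psi>' v))"
  "\<psi> (gR v) = scale \<delta> (fR (\<phi>' v))"
  using leibniz[of "(0, 0, 0, v)" "(0, 1, 0, 0)"] by (simp_all add: D_a_eq D_V D_V' mult_simps add.commute)

end

end

theorem lemma2:
  fixes scale :: "'k::field \<Rightarrow> 'v::ab_group_add \<Rightarrow> 'v"
    and fL fR gL gR :: "'v \<Rightarrow> 'v"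
    and \<delta> \<gamma> :: 'k
    and D :: "'k \<times> 'k \<times> 'v \<times> 'v \<Rightarrow> 'k \<times> 'k \<times> 'v \<times> 'v"
  assumes vs: "vector_space scale"
    and lin: "Vector_Spaces.linear scale scale fL" "Vector_Spaces.linear scale scale fR"
             "Vector_Spaces.linear scale scale gL" "Vector_Spaces.linear scale scale gR"
    and nz: "fL \<noteq> (\<lambda>v. 0)" "fR \<noteq> (\<lambda>v. 0)" "gL \<noteq> (\<lambda>v. 0)" "gR \<noteq> (\<lambda>v. 0)"
    and dg: "(\<delta>, \<gamma>) \<noteq> (0, 0)"
    and der: "is_dg_derivation scale fL fR gL gR \<delta> \<gamma> D"
  shows "\<exists>\<alpha> \<beta> va wa \<phi> \<psi> \<phi>t \<psi>t.
    Vector_Spaces.linear scale scale \<phi> \<and> Vector_Spaces.linear scale scale \<psi> \<and>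
    Vector_Spaces.linear scale scale \<phi>t \<and> Vector_Spaces.linear scale scale \<psi>t \<and>
    D (1, 0, 0, 0) = (if \<delta> + \<gamma> \<noteq> 1 then (0, 0, 0, 0) else (\<beta>, 0, 0, 0)) \<and>
    D (0, 1, 0, 0) = (0, \<alpha>, va, wa) \<and>
    (\<forall>v. D (0, 0, v, 0) = (0, 0, \<phi> v, \<psi> v)) \<and>
    (\<forall>v. D (0, 0, 0, v) = (0, 0, \<phi>t v, \<psi>t v)) \<and>
    scale \<delta> (fR va) + scale \<gamma> (fL va) = 0 \<and>
    scale \<delta> (gR wa) + scale \<gamma> (gL wa) = 0 \<and>
    (\<forall>v. \<phi>t (fL v) = scale \<gamma> (gL (\<psi> v))) \<and>
    (\<forall>v. \<psi>t (fL v) = scale (\<delta> * \<alpha>) (fL v) + scale \<gamma> (fL (\<phi> v))) \<and>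
    (\<forall>v. \<phi>t (fR v) = scale \<delta> (gR (\<psi> v))) \<and>
    (\<forall>v. \<psi>t (fR v) = scale (\<gamma> * \<alpha>) (fR v) + scale \<delta> (fR (\<phi> v))) \<and>
    (\<forall>v. \<phi> (gL v) = scale (\<delta> * \<alpha>) (gL v) + scale \<gamma> (gL (\<psi>t v))) \<and>
    (\<forall>v. \<psi> (gL v) = scale \<gamma> (fL (\<phi>t v))) \<and>
    (\<forall>v. \<phi> (gR v) = scale (\<gamma> * \<alpha>) (gR v) + scale \<delta> (gR (\<psi>t v))) \<and>
    (\<forall>v. \<psi> (gR v) = scale \<delta> (fR (\<phi>t v)))"
proof -
  interpret nondegenerate_A_derivation scale fL fR gL gR \<delta> \<gamma> D
    using vs lin nz dg der by (simp add: nondegenerate_A_derivation_def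
        nondegenerate_A_derivation_axioms_def A_derivation_def A_derivation_axioms_def)
  obtain \<beta> where De: "D (1, 0, 0, 0) = (if \<delta> + \<gamma> \<noteq> 1 then (0, 0, 0, 0) else (\<beta>, 0, 0, 0))"
    by (rule D_e_cases)
  obtain \<alpha> va wa where Da: "D (0, 1, 0, 0) = (0, \<alpha>, va, wa)"
    by (rule D_a)
  show ?thesis
    apply (rule exI[of _ \<alpha>], rule exI[of _ \<beta>], rule exI[of _ va], rule exI[of _ wa])
    apply (rule exI[of _ \<phi>], rule exI[of _ \<psi>], rule exI[of _ \<phi>'], rule exI[of _ \<psi>'])
    using linear_coordinate_maps De Da D_V D_V' D_a_annihilated[OF Da]
      fL_relations[OF Da] fR_relations[OF Da] gL_relations[OF Da] gR_relations[OF Da]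
    by blast
qed

end
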